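(* Let $d$ be an integer and $x$ a real number with $0<d\leqslant x/2$, and let $K_d$ be the largest integer $k$ such that $(k-d)k\leqslant dx$ (i.e. $K_d=\lfloor (d+\sqrt{d^2+4dx})/2\rfloor$). Then for every integer $k$ with $K_d-d<k\leqslant K_d$, $$d\lfloor x/k \rfloor +\frac{x}{\lfloor x/k \rfloor}=2\sqrt{dx}+O\bigl(d^{3/2}x^{-1/2}\bigr),$$ with an absolute implied constant.
   Context: $\lfloor t\rfloor$ denotes the integer part of the real number $t$. *)

theory Defs
  imports Complex_Main
begin

definition Kd :: "int \<Rightarrow> real \<Rightarrow> int" where
  "Kd d x = (GREATEST k::int. real_of_int ((k - d) * k) \<le> real_of_int d * x)"

end

theory Submission
  imports Defs
begin

text \<open>Put \<open>y = sqrt (x / d)\<close>, so that \<open>x = d y\<^sup>2\<close> and \<open>sqrt (d x) = d y\<close>. For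
  \<open>m = \<lfloor>x / k\<rfloor>\<close> one has \<open>d m + x / m - 2 sqrt (d x) = d (m - y)\<^sup>2 / m\<close>.
  The window \<open>K\<^sub>d - d < k \<le> K\<^sub>d\<close> means \<open>(k - d) k \<le> d x < k (k + d)\<close>, which confines \<open>k\<close>
  to \<open>(d (y - 1/2), d (y + 1)]\<close>; hence \<open>x / k\<close> lies within 1 of \<open>y\<close>, \<open>m\<close> within 2 of \<open>y\<close>
  and \<open>m \<ge> y / 4\<close>, so the right-hand side is at most \<open>16 d / y = 16 d\<^bsup>3/2\<^esup> x\<^bsup>-1/2\<^esup>\<close>.\<close>

lemma abs_le_of_quadratic_le:
  fixes d k n :: int
  assumes "(k - d) * k \<le> n" "0 \<le> n"
  shows "\<bar>k\<bar> \<le> \<bar>d\<bar> + n"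
proof (rule ccontr)
  assume "\<not> ?thesis"
  then have "n < \<bar>k\<bar> - \<bar>d\<bar>" "1 \<le> \<bar>k\<bar>" using assms(2) by linarith+
  then have "n < \<bar>k\<bar> * (\<bar>k\<bar> - \<bar>d\<bar>)"
    using assms(2) by (smt (verit) mult_le_cancel_right1)
  also have "\<dots> \<le> (k - d) * k"
    using abs_ge_self[of "d * k"] by (simp add: algebra_simps abs_mult abs_mult_self_eq)
  finally show False using assms(1) by simp
qed

lemma Kd_eq_Max:
  assumes "0 \<le> real_of_int d * x"
  shows "Kd d x = Max {k. (k - d) * k \<le> \<lfloor>real_of_int d * x\<rfloor>}"
    and "finite {k. (k - d) * k \<le> \<lfloor>real_of_int d * x\<rfloor>}"
proof -
  let ?n = "\<lfloor>real_of_int d * x\<rfloor>"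
  have n: "0 \<le> ?n" using assms by simp
  have "{k. (k - d) * k \<le> ?n} \<subseteq> {-(\<bar>d\<bar> + ?n)..\<bar>d\<bar> + ?n}"
  proof
    fix k assume "k \<in> {k. (k - d) * k \<le> ?n}"
    then have "\<bar>k\<bar> \<le> \<bar>d\<bar> + ?n" using abs_le_of_quadratic_le n by blast
    then show "k \<in> {-(\<bar>d\<bar> + ?n)..\<bar>d\<bar> + ?n}" by auto
  qed
  then show fin: "finite {k. (k - d) * k \<le> ?n}" by (rule finite_subset) simp
  have "\<exists>k. (k - d) * k \<le> ?n" using n by (intro exI[of _ 0]) simp
  then have "(GREATEST k. (k - d) * k \<le> ?n) = Max {k. (k - d) * k \<le> ?n}"
    using fin by (rule Greatest_Max[rotated])
  then show "Kd d x = Max {k. (k - d) * k \<le> ?n}" unfolding Kd_def by (simp add: le_floor_iff)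
qed

lemma Kd_le:
  assumes "0 \<le> real_of_int d * x"
  shows "real_of_int ((Kd d x - d) * Kd d x) \<le> real_of_int d * x"
proof -
  have "0 \<in> {k. (k - d) * k \<le> \<lfloor>real_of_int d * x\<rfloor>}" using assms by simp
  then have "Kd d x \<in> {k. (k - d) * k \<le> \<lfloor>real_of_int d * x\<rfloor>}"
    unfolding Kd_eq_Max(1)[OF assms] using Kd_eq_Max(2)[OF assms] by (intro Max_in) blast+
  then show ?thesis by (simp add: le_floor_iff)
qed

lemma le_Kd:
  assumes "0 \<le> real_of_int d * x" "real_of_int ((k - d) * k) \<le> real_of_int d * x"
  shows "k \<le> Kd d x"
  unfolding Kd_eq_Max(1)[OF assms(1)] using Kd_eq_Max(2)[OF assms(1)] assms(2)
  by (simp add: le_floor_iff)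

lemma Kd_window:
  fixes d k :: int
  assumes d: "0 < d" and dx: "2 * real_of_int d \<le> x"
    and k: "Kd d x - d < k" "k \<le> Kd d x"
  shows "0 < k" and "real_of_int k \<le> x"
    and "(real_of_int k - real_of_int d) * real_of_int k \<le> real_of_int d * x"
    and "real_of_int d * x < real_of_int k * (real_of_int k + real_of_int d)"
proof -
  let ?K = "Kd d x"
  have dx_nonneg: "0 \<le> real_of_int d * x" using d dx by simp
  have K: "real_of_int ((?K - d) * ?K) \<le> real_of_int d * x" using Kd_le[OF dx_nonneg] .
  have "real_of_int ((2 * d - d) * (2 * d)) = real_of_int d * (2 * real_of_int d)" by simp
  also have "\<dots> \<le> real_of_int d * x" using d dx by (intro mult_left_mono) auto
  finally have "real_of_int ((2 * d - d) * (2 * d)) \<le> real_of_int d * x" .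
  then have K_ge: "2 * d \<le> ?K" using le_Kd[OF dx_nonneg] by blast
  then show "0 < k" using d k by linarith
  have "d * ?K \<le> (?K - d) * ?K" using K_ge d by (intro mult_right_mono) auto
  then have "real_of_int d * real_of_int ?K \<le> real_of_int d * x"
    using K by (metis of_int_le_iff of_int_mult order_trans)
  then have "real_of_int ?K \<le> x" using d by simp
  then show "real_of_int k \<le> x" using k by linarith
  have "(k - d) * k \<le> (?K - d) * ?K"
    using k K_ge by (intro mult_mono) auto
  then show "(real_of_int k - real_of_int d) * real_of_int k \<le> real_of_int d * x"
    using K by (metis of_int_diff of_int_le_iff of_int_mult order_trans)
  have "\<not> real_of_int ((k + d - d) * (k + d)) \<le> real_of_int d * x"
    using le_Kd[OF dx_nonneg, of "k + d"] k by linarith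
  then show "real_of_int d * x < real_of_int k * (real_of_int k + real_of_int d)"
    by simp
qed

lemma le_add_of_quadratic_le:
  fixes k D s :: real
  assumes "0 \<le> D" "0 \<le> s" "(k - D) * k \<le> s\<^sup>2"
  shows "k \<le> s + D"
proof (rule ccontr)
  assume "\<not> ?thesis"
  then have "s * s < (k - D) * k" using assms(1,2) by (intro mult_strict_mono) auto
  then show False using assms(3) by (simp add: power2_eq_square)
qed

lemma sub_half_less_of_quadratic_gt:
  fixes k D s :: real
  assumes "0 \<le> D" "0 \<le> k" "s\<^sup>2 < k * (k + D)"
  shows "s - D / 2 < k"
proof (rule ccontr)
  assume "\<not> ?thesis"
  then have "k * (k + D) \<le> (s - D / 2) * (s + D / 2)" using assms(1,2) by (intro mult_mono) auto
  also have "\<dots> = s\<^sup>2 - D\<^sup>2 / 4" by (simp add: algebra_simps power2_eq_square)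
  finally show False using assms(3) zero_le_power2[of D] by linarith
qed

lemma near_root_div_bounds:
  fixes D y k :: real
  assumes D: "0 < D" and y: "1 \<le> y" and k: "D * (y - 1/2) < k" "k \<le> D * (y + 1)"
  shows "y - 1 \<le> D * y\<^sup>2 / k" and "D * y\<^sup>2 / k < y + 1"
proof -
  have "0 < D * (y - 1/2)" using D y by simp
  then have k_pos: "0 < k" using k(1) by linarith
  have "(y - 1) * k \<le> (y - 1) * (D * (y + 1))" using y k(2) by (intro mult_left_mono) auto
  also have "\<dots> = D * y\<^sup>2 - D" by (simp add: algebra_simps power2_eq_square)
  finally have "(y - 1) * k \<le> D * y\<^sup>2" using D by linarith
  then show "y - 1 \<le> D * y\<^sup>2 / k" using k_pos by (simp add: le_divide_eq)
  have "0 \<le> D * (y - 1)" using D y by simp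
  then have "D * y\<^sup>2 \<le> (y + 1) * (D * (y - 1/2))"
    by (simp add: algebra_simps power2_eq_square)
  also have "\<dots> < (y + 1) * k" using y k(1) by (intro mult_strict_left_mono) auto
  finally show "D * y\<^sup>2 / k < y + 1" using k_pos by (simp add: divide_less_eq)
qed

lemma floor_div_estimate:
  fixes D y k :: real
  assumes D: "0 < D" and y: "1 \<le> y" and k: "0 < k" "k \<le> D * y\<^sup>2"
    and below: "(k - D) * k \<le> (D * y)\<^sup>2" and above: "(D * y)\<^sup>2 < k * (k + D)"
  defines "m \<equiv> real_of_int \<lfloor>D * y\<^sup>2 / k\<rfloor>"
  shows "\<bar>D * m + D * y\<^sup>2 / m - 2 * (D * y)\<bar> \<le> 16 * D / y"
proof -
  have "k \<le> D * y + D" using le_add_of_quadratic_le[OF _ _ below] D y by simp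
  moreover have "D * y - D / 2 < k" using sub_half_less_of_quadratic_gt[OF _ _ above] D k by simp
  ultimately have "y - 1 \<le> D * y\<^sup>2 / k" "D * y\<^sup>2 / k < y + 1"
    using near_root_div_bounds[OF D y, of k] by (simp_all add: algebra_simps)
  moreover have "m \<le> D * y\<^sup>2 / k" "D * y\<^sup>2 / k - 1 < m" unfolding m_def by linarith+
  ultimately have "\<bar>m - y\<bar> \<le> \<bar>2\<bar>" by simp
  then have dist: "(m - y)\<^sup>2 \<le> 4" using abs_le_square_iff[of "m - y" 2] by simp
  have "1 \<le> D * y\<^sup>2 / k" using k by (simp add: le_divide_eq)
  then have m_ge_1: "1 \<le> m" unfolding m_def by simp
  have m_ge: "y / 4 \<le> m" using \<open>D * y\<^sup>2 / k - 1 < m\<close> \<open>y - 1 \<le> D * y\<^sup>2 / k\<close> m_ge_1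
    by linarith
  have "D * m + D * y\<^sup>2 / m - 2 * (D * y) = D * (m - y)\<^sup>2 / m"
    using m_ge_1 by (simp add: field_simps power2_eq_square)
  moreover have "0 \<le> D * (m - y)\<^sup>2 / m" using D m_ge_1 by simp
  moreover have "D * (m - y)\<^sup>2 / m \<le> 16 * D / y"
  proof -
    have "D * (m - y)\<^sup>2 / m \<le> D * 4 / m"
      using dist D m_ge_1 by (intro divide_right_mono mult_left_mono) auto
    also have "\<dots> \<le> D * 4 / (y / 4)" using m_ge D y by (intro divide_left_mono) auto
    finally show ?thesis by simp
  qed
  ultimately show ?thesis by simp
qed

lemma div_sqrt_div_eq_powr:
  fixes d x :: real
  assumes "0 < d" "0 < x"
  shows "d / sqrt (x / d) = d powr (3/2) * x powr (-1/2)"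
proof -
  have "d powr (3/2) = d * sqrt d"
    using powr_add[of d 1 "1/2"] assms by (simp add: powr_half_sqrt)
  moreover have "x powr (-1/2) = 1 / sqrt x"
    using assms by (simp add: powr_minus_divide powr_half_sqrt)
  ultimately show ?thesis using assms by (simp add: real_sqrt_divide)
qed

theorem proposition5:
  shows "\<exists>C::real. \<forall>(d::int) (x::real) (k::int).
    0 < d \<and> real_of_int d \<le> x / 2 \<and> Kd d x - d < k \<and> k \<le> Kd d x \<longrightarrow>
    \<bar>real_of_int d * real_of_int \<lfloor>x / real_of_int k\<rfloor> + x / real_of_int \<lfloor>x / real_of_int k\<rfloor>
       - 2 * sqrt (real_of_int d * x)\<bar>
      \<le> C * real_of_int d powr (3/2) * x powr (-1/2)"
proof (intro exI[of _ 16] allI impI)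
  fix d :: int and x :: real and k :: int
  assume "0 < d \<and> real_of_int d \<le> x / 2 \<and> Kd d x - d < k \<and> k \<le> Kd d x"
  then have d: "0 < d" and dx: "2 * real_of_int d \<le> x" and k: "Kd d x - d < k" "k \<le> Kd d x"
    by auto
  have x_pos: "0 < x" using d dx by linarith
  define y where "y = sqrt (x / d)"
  have y_pos: "0 < y" unfolding y_def using d x_pos by simp
  have x_eq: "x = d * y\<^sup>2" unfolding y_def using d x_pos by simp
  have dy_sq: "(d * y)\<^sup>2 = real_of_int d * x" using x_eq by (simp add: power2_eq_square)
  then have sqrt_dx: "sqrt (real_of_int d * x) = d * y" using d y_pos by (intro real_sqrt_unique) auto
  have "d / y = d powr (3/2) * x powr (-1/2)"
    unfolding y_def using d x_pos by (simp add: div_sqrt_div_eq_powr)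
  moreover have "1 \<le> y" unfolding y_def using d dx by (simp add: le_divide_eq)
  then have "\<bar>d * real_of_int \<lfloor>x / k\<rfloor> + x / real_of_int \<lfloor>x / k\<rfloor> - 2 * (d * y)\<bar> \<le> 16 * d / y"
    using floor_div_estimate[of d y k] Kd_window[OF d dx k] d unfolding dy_sq x_eq[symmetric]
    by simp
  ultimately show "\<bar>real_of_int d * real_of_int \<lfloor>x / real_of_int k\<rfloor> + x / real_of_int \<lfloor>x / real_of_int k\<rfloor>
       - 2 * sqrt (real_of_int d * x)\<bar> \<le> 16 * real_of_int d powr (3/2) * x powr (-1/2)"
    unfolding sqrt_dx by simp
qed

end
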